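(* Let $G=\{(1),(12)(34),(13)(24),(14)(23)\}\le S_4$, whose normalizer in $S_4$ is $S_4$. The homomorphism $S_4\to Aut_0(T_{4;G})$, $\nu\mapsto\hat\nu$, has kernel $G$ and image (the group of hidden symmetries) of order $6$, isomorphic to $S_3$. Writing $P_{ij}$ for the $G$-orbit of $(\{i,j\},\{k,l\})$ in $T_{(2^2)}$ and $Q_{ij}$ for the $G$-orbit of $(\{i,j\},\{k\},\{l\})$ in $T_{(2,1^2)}$ (where $\{i,j,k,l\}=\{1,2,3,4\}$; note $P_{ij}=P_{kl}$, $Q_{ij}=Q_{kl}$), one has: $\hat\nu(P_{ij})=P_{\nu(i)\nu(j)}$ and $\hat\nu(Q_{ij})=Q_{\nu(i)\nu(j)}$; in particular $\widehat{(13)}$ interchanges $P_{12}$ and $P_{14}$ and fixes $P_{13}$, and likewise interchanges $Q_{12}$ and $Q_{14}$ and fixes $Q_{13}$. Moreover, for each transposition $\nu$ the automorphism $\hat\nu$ acts on the six elements of $T_{(1^4);G}$ as a product of three disjoint transpositions, and for each $3$-cycle $\nu$ it acts on them as a product of two disjoint $3$-cycles.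
   Context: For a partition $\lambda=(\lambda_1\ge\dots\ge\lambda_k>0)$ of $4$, a tabloid of shape $\lambda$ is a sequence $A=(A_1,\dots,A_k)$ of pairwise disjoint subsets of $\{1,2,3,4\}$ with $|A_i|=\lambda_i$; $T_\lambda$ is their set. $S_4$ acts by $\zeta A=(\zeta(A_1),\dots,\zeta(A_k))$. Tabloids are partially ordered by $A\le B$ iff $A_1\cup\dots\cup A_i\subseteq B_1\cup\dots\cup B_i$ for all $i\ge1$ (missing rows empty); $T_{\lambda;G}$ is the set of $G$-orbits in $T_\lambda$, $T_{4;G}$ the set of all $G$-orbits of tabloids, ordered by $a\le b$ iff there are $A\in a$, $B\in b$ with $A\le B$. $Aut_0(T_{4;G})$ is the group of order-automorphisms of $T_{4;G}$ mapping each $T_{\mu;G}$ onto itself. For $\nu$ normalizing $G$, $\hat\nu$ is the map $O_G(A)\mapsto O_G(\nu A)$. *)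

theory Defs
  imports "HOL-Algebra.Sym_Groups"
begin

text \<open>Points are 1,2,3,4 (naturals). S4 is the group of permutations of {1..4},
  i.e. sym_group 4. A tabloid is a list of sets of points.\<close>

definition partitions4 :: "nat list set" where
  "partitions4 = {lam. sorted_wrt (\<ge>) lam \<and> (\<forall>x\<in>set lam. x > 0) \<and> sum_list lam = 4}"

definition tabloids :: "nat list \<Rightarrow> nat set list set" where
  "tabloids lam = {A. length A = length lam \<and>
      (\<forall>i<length A. A ! i \<subseteq> {1..4} \<and> card (A ! i) = lam ! i) \<and>
      (\<forall>i<length A. \<forall>j<length A. i \<noteq> j \<longrightarrow> A ! i \<inter> A ! j = {})}"

definition act :: "(nat \<Rightarrow> nat) \<Rightarrow> nat set list \<Rightarrow> nat set list" where
  "act \<zeta> A = map (\<lambda>S. \<zeta> ` S) A"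

definition tab_le :: "nat set list \<Rightarrow> nat set list \<Rightarrow> bool" where
  "tab_le A B \<longleftrightarrow> (\<forall>i\<ge>1. \<Union>(set (take i A)) \<subseteq> \<Union>(set (take i B)))"

definition Gk :: "(nat \<Rightarrow> nat) set" where
  "Gk = {id, transpose 1 2 \<circ> transpose 3 4, transpose 1 3 \<circ> transpose 2 4,
         transpose 1 4 \<circ> transpose 2 3}"

definition orb :: "nat set list \<Rightarrow> nat set list set" where
  "orb A = (\<lambda>g. act g A) ` Gk"

definition TG :: "nat list \<Rightarrow> nat set list set set" where
  "TG lam = orb ` tabloids lam"

definition T4G :: "nat set list set set" where
  "T4G = (\<Union>lam\<in>partitions4. TG lam)"

definition orb_le :: "nat set list set \<Rightarrow> nat set list set \<Rightarrow> bool" where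
  "orb_le a b \<longleftrightarrow> (\<exists>A\<in>a. \<exists>B\<in>b. tab_le A B)"

definition Aut0 :: "(nat set list set \<Rightarrow> nat set list set) set" where
  "Aut0 = {f. bij_betw f T4G T4G \<and>
      (\<forall>a\<in>T4G. \<forall>b\<in>T4G. orb_le (f a) (f b) \<longleftrightarrow> orb_le a b) \<and>
      (\<forall>mu\<in>partitions4. f ` TG mu = TG mu) \<and>
      (\<forall>x. x \<notin> T4G \<longrightarrow> f x = x)}"

definition aut0_group :: "(nat set list set \<Rightarrow> nat set list set) monoid" where
  "aut0_group = \<lparr>carrier = Aut0, mult = (\<circ>), one = id\<rparr>"

definition hat :: "(nat \<Rightarrow> nat) \<Rightarrow> nat set list set \<Rightarrow> nat set list set" where
  "hat \<nu> a = (if a \<in> T4G then orb (act \<nu> (SOME A. A \<in> a)) else a)"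

definition hidden_sym_group :: "(nat set list set \<Rightarrow> nat set list set) monoid" where
  "hidden_sym_group = \<lparr>carrier = hat ` carrier (sym_group 4), mult = (\<circ>), one = id\<rparr>"

definition P :: "nat \<Rightarrow> nat \<Rightarrow> nat set list set" where
  "P i j = orb [{i, j}, {1..4} - {i, j}]"

definition Q :: "nat \<Rightarrow> nat \<Rightarrow> nat set list set" where
  "Q i j = orb [{i, j}, {Min ({1..4} - {i, j})}, {Max ({1..4} - {i, j})}]"

definition is_transposition4 :: "(nat \<Rightarrow> nat) \<Rightarrow> bool" where
  "is_transposition4 \<nu> \<longleftrightarrow> (\<exists>a\<in>{1..4}. \<exists>b\<in>{1..4}. a \<noteq> b \<and> \<nu> = transpose a b)"

definition is_3cycle4 :: "(nat \<Rightarrow> nat) \<Rightarrow> bool" where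
  "is_3cycle4 \<nu> \<longleftrightarrow> (\<exists>a\<in>{1..4}. \<exists>b\<in>{1..4}. \<exists>c\<in>{1..4}. distinct [a, b, c] \<and>
      \<nu> = (\<lambda>x. if x = a then b else if x = b then c else if x = c then a else x))"

definition three_disjoint_transpositions :: "('a \<Rightarrow> 'a) \<Rightarrow> 'a set \<Rightarrow> bool" where
  "three_disjoint_transpositions f S \<longleftrightarrow> (\<exists>x1 x2 x3 x4 x5 x6.
      distinct [x1, x2, x3, x4, x5, x6] \<and> S = {x1, x2, x3, x4, x5, x6} \<and>
      f x1 = x2 \<and> f x2 = x1 \<and> f x3 = x4 \<and> f x4 = x3 \<and> f x5 = x6 \<and> f x6 = x5)"

definition two_disjoint_3cycles :: "('a \<Rightarrow> 'a) \<Rightarrow> 'a set \<Rightarrow> bool" where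
  "two_disjoint_3cycles f S \<longleftrightarrow> (\<exists>x1 x2 x3 x4 x5 x6.
      distinct [x1, x2, x3, x4, x5, x6] \<and> S = {x1, x2, x3, x4, x5, x6} \<and>
      f x1 = x2 \<and> f x2 = x3 \<and> f x3 = x1 \<and> f x4 = x5 \<and> f x5 = x6 \<and> f x6 = x4)"

end

theory Submission
  imports Defs
begin

(* The Klein four-group G consists of the identity and the fixed-point-free involutions of
   {1,2,3,4}. This description is invariant under conjugation, so G is normal in S_4 and
   nu-hat is well defined; being induced by an action on tabloids, it preserves the order and
   the shapes. G acts freely on the tabloids of shape (1^4), so nu-hat fixes one of their
   orbits only if nu lies in G: this gives the kernel, and shows that for nu outside G the map
   nu-hat moves all six orbits of T_{(1^4);G}. As G is transitive on {1,2,3,4}, the stabiliser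
   S_3 of the point 4 is a complement of G; hence hat maps S_3 isomorphically onto the hidden
   symmetries, and S_3 acts simply transitively on the six orbits. A fixed-point-free
   permutation of six points of order 2 (resp. 3) is a product of three disjoint transpositions
   (resp. two disjoint 3-cycles). *)

lemma permutes_eqI:
  assumes "p permutes S" "q permutes S" "\<And>x. x \<in> S \<Longrightarrow> p x = q x"
  shows "p = q"
  using assms by (metis ext permutes_not_in)

lemma atLeastAtMost_1_4: "{1..4::nat} = {1,2,3,4}" by auto

lemma permutes_1_4_eqI:
  fixes p q :: "nat \<Rightarrow> nat"
  assumes "p permutes {1..4}" "q permutes {1..4}"
    and "p 1 = q 1" "p 2 = q 2" "p 3 = q 3" "p 4 = q 4"
  shows "p = q"
proof (rule permutes_eqI[OF assms(1,2)])
  fix x :: nat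
  assume "x \<in> {1..4}"
  then have "x \<in> {1,2,3,4}" by (simp only: atLeastAtMost_1_4)
  then show "p x = q x" using assms(3-6) by auto
qed

lemma distinct_1_4_cover:
  fixes i j k l :: nat
  assumes "distinct [i, j, k, l]" "{i, j, k, l} \<subseteq> {1..4}"
  shows "{i, j, k, l} = {1..4}"
  using assms by (intro card_subset_eq) simp_all

lemma permutes_distinct_cover:
  assumes v: "v permutes {1..4}" and "distinct [i, j, k, l]" "{i, j, k, l} = {1..4}"
  shows "distinct [v i, v j, v k, v l]" "{v i, v j, v k, v l} = {1..4}"
proof -
  show "distinct [v i, v j, v k, v l]"
    using assms(2) inj_eq[OF permutes_inj[OF v]] by simp
  have "{v i, v j, v k, v l} = v ` {1..4}" by (simp add: assms(3)[symmetric])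
  then show "{v i, v j, v k, v l} = {1..4}" by (simp add: permutes_image[OF v])
qed

lemma complement_pair_exists:
  fixes i j :: nat
  assumes "i \<in> {1..4}" "j \<in> {1..4}" "i \<noteq> j"
  obtains k l where "distinct [i, j, k, l]" "{i, j, k, l} = {1..4}"
proof -
  have "card ({1..4} - {i, j}) = 2"
    using assms by (simp add: card_Diff_subset)
  then obtain k l where kl: "{1..4} - {i, j} = {k, l}" "k \<noteq> l"
    by (auto simp: card_2_iff)
  then have "k \<notin> {i, j}" "l \<notin> {i, j}" by blast+
  with kl(2) assms(3) have "distinct [i, j, k, l]" by simp
  moreover have "{i, j, k, l} = {1..4}"
  proof -
    have "{i, j, k, l} = {i, j} \<union> ({1..4} - {i, j})" unfolding kl(1) by auto
    also have "\<dots> = {1..4}" using assms(1,2) by blast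
    finally show ?thesis .
  qed
  ultimately show ?thesis by (rule that)
qed

lemma permutes_of_values:
  fixes a b c d :: nat
  assumes "distinct [a, b, c, d]" "{a, b, c, d} = {1..4}"
  shows "id(1 := a, 2 := b, 3 := c, 4 := d) permutes {1..4}"
  unfolding atLeastAtMost_1_4
proof (rule bij_imp_permutes)
  let ?v = "id(1 := a, 2 := b, 3 := c, 4 := d)"
  have "?v ` {1,2,3,4} = {1,2,3,4}" using assms(2) unfolding atLeastAtMost_1_4 by simp
  moreover have "inj_on ?v {1,2,3,4}"
    using assms(1) by (auto simp: inj_on_def)
  ultimately show "bij_betw ?v {1,2,3,4} {1,2,3,4}" by (simp add: bij_betw_def)
qed auto

lemma Gk_iff_values:
  "g \<in> Gk \<longleftrightarrow> g permutes {1..4} \<and>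
     (g 1, g 2, g 3, g 4) \<in> {(1,2,3,4), (2,1,4,3), (3,4,1,2), (4,3,2,1)}"
proof -
  have "\<forall>h\<in>Gk. h permutes {1..4}"
    unfolding Gk_def by (auto intro!: permutes_compose permutes_swap_id)
  then have "\<forall>h\<in>Gk. g = h \<longleftrightarrow> g permutes {1..4} \<and> (g 1, g 2, g 3, g 4) = (h 1, h 2, h 3, h 4)"
    by (auto intro: permutes_1_4_eqI)
  then show ?thesis
    unfolding Gk_def by (simp add: transpose_def) blast
qed

lemma Gk_permutes: "g \<in> Gk \<Longrightarrow> g permutes {1..4}"
  by (simp add: Gk_iff_values)

lemma id_in_Gk: "id \<in> Gk"
  by (simp add: Gk_def)

lemma Gk_comp_closed:
  assumes "g \<in> Gk" "h \<in> Gk"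
  shows "g \<circ> h \<in> Gk"
proof -
  from assms have "(g (h 1), g (h 2), g (h 3), g (h 4)) \<in> {(1,2,3,4), (2,1,4,3), (3,4,1,2), (4,3,2,1)}"
    unfolding Gk_iff_values by (elim conjE insertE emptyE; simp)+
  with assms show ?thesis
    by (simp add: Gk_iff_values permutes_compose)
qed

lemma Gk_comp_self:
  assumes "g \<in> Gk"
  shows "g \<circ> g = id"
proof (rule permutes_1_4_eqI)
  show "g \<circ> g permutes {1..4}" by (intro permutes_compose Gk_permutes assms)
  show "(g \<circ> g) 1 = id 1" "(g \<circ> g) 2 = id 2" "(g \<circ> g) 3 = id 3" "(g \<circ> g) 4 = id 4"
    using assms unfolding Gk_iff_values by (elim conjE insertE emptyE; simp)+
qed (rule permutes_id)

lemma involution_swaps_complementary_pair: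
  assumes "distinct [a, b, c, d]" "inj g" "g c \<in> {a, b, c, d}"
    and "g a = b" "g b = a" "g c \<noteq> c" "g (g c) = c"
  shows "g c = d \<and> g d = c"
proof -
  have "g c \<noteq> a"
  proof
    assume "g c = a"
    with assms(4,7) have "c = b" by simp
    with assms(1) show False by simp
  qed
  moreover have "g c \<noteq> b"
  proof
    assume "g c = b"
    with assms(2,4) have "c = a" by (metis injD)
    with assms(1) show False by simp
  qed
  ultimately show ?thesis using assms(3,6,7) by auto
qed

lemma Gk_iff_fixpoint_free_involution:
  "g \<in> Gk \<longleftrightarrow> g permutes {1..4} \<and> (g = id \<or> (\<forall>x\<in>{1..4}. g x \<noteq> x \<and> g (g x) = x))"
proof -
  have "(g 1, g 2, g 3, g 4) \<in> {(2,1,4,3), (3,4,1,2), (4,3,2,1)}"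
    if g: "g permutes {1..4}" and invol: "\<forall>x\<in>{1..4}. g x \<noteq> x \<and> g (g x) = x"
  proof -
    have maps: "g x \<in> {1,2,3,4}" if "x \<in> {1,2,3,4}" for x
      using permutes_in_image[OF g, of x] that unfolding atLeastAtMost_1_4 by blast
    have fpf: "g x \<noteq> x" "g (g x) = x" if "x \<in> {1,2,3,4}" for x
      using invol that unfolding atLeastAtMost_1_4 by blast+
    note swap = involution_swaps_complementary_pair[OF _ permutes_inj[OF g]]
    have "g 1 \<in> {2,3,4}" using maps[of 1] fpf[of 1] by auto
    then show ?thesis
    proof (elim insertE emptyE)
      assume "g 1 = 2"
      then show ?thesis using swap[of 1 2 3 4] maps[of 3] fpf[of 1] fpf[of 3] by simp
    next
      assume "g 1 = 3"
      then show ?thesis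
        using swap[of 1 3 2 4] maps[of 2] fpf[of 1] fpf[of 2] by (simp add: insert_commute)
    next
      assume "g 1 = 4"
      then show ?thesis
        using swap[of 1 4 2 3] maps[of 2] fpf[of 1] fpf[of 2] by (simp add: insert_commute)
    qed
  qed
  moreover have "g = id \<or> (\<forall>x\<in>{1..4}. g x \<noteq> x \<and> g (g x) = x)" if "g \<in> Gk"
  proof -
    from that have g: "g permutes {1..4}"
      and "(g 1, g 2, g 3, g 4) \<in> {(1,2,3,4), (2,1,4,3), (3,4,1,2), (4,3,2,1)}"
      by (simp_all add: Gk_iff_values)
    then have "g = id \<or> (\<forall>x\<in>{1,2,3,4}. g x \<noteq> x \<and> g (g x) = x)"
    proof (elim insertE emptyE)
      assume "(g 1, g 2, g 3, g 4) = (1,2,3,4)"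
      then have "g = id" by (intro permutes_1_4_eqI[OF g permutes_id]) simp_all
      then show ?thesis ..
    qed simp_all
    then show ?thesis by (simp only: atLeastAtMost_1_4)
  qed
  ultimately show ?thesis
    using Gk_permutes id_in_Gk Gk_iff_values[of g] by blast
qed

lemma Gk_fixpoint_imp_id: "g \<in> Gk \<Longrightarrow> g a = a \<Longrightarrow> a \<in> {1..4} \<Longrightarrow> g = id"
  unfolding Gk_iff_fixpoint_free_involution by blast

lemma Gk_conj_closed:
  assumes v: "v permutes {1..4}" and g: "g \<in> Gk"
  shows "v \<circ> g \<circ> Hilbert_Choice.inv v \<in> Gk"
proof -
  let ?c = "v \<circ> g \<circ> Hilbert_Choice.inv v"
  have "g = id \<or> (\<forall>x\<in>{1..4}. g x \<noteq> x \<and> g (g x) = x)"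
    using g Gk_iff_fixpoint_free_involution by blast
  then have "?c = id \<or> (\<forall>x\<in>{1..4}. ?c x \<noteq> x \<and> ?c (?c x) = x)"
  proof
    assume "g = id"
    then show ?thesis using permutes_inv_o(1)[OF v] by simp
  next
    assume fpf: "\<forall>x\<in>{1..4}. g x \<noteq> x \<and> g (g x) = x"
    have "?c (v y) \<noteq> v y \<and> ?c (?c (v y)) = v y" if "y \<in> {1..4}" for y
      using fpf that by (simp add: permutes_inverses(2)[OF v] inj_eq[OF permutes_inj[OF v]])
    moreover have "x = v (Hilbert_Choice.inv v x) \<and> Hilbert_Choice.inv v x \<in> {1..4}"
      if "x \<in> {1..4}" for x
      using that permutes_inverses(1)[OF v] permutes_in_image[OF permutes_inv[OF v]] by simp
    ultimately show ?thesis by metis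
  qed
  moreover have "?c permutes {1..4}"
    by (intro permutes_compose permutes_inv v Gk_permutes g)
  ultimately show ?thesis
    using Gk_iff_fixpoint_free_involution by blast
qed

lemma Gk_conj_image:
  assumes v: "v permutes {1..4}"
  shows "(\<lambda>g. v \<circ> g \<circ> Hilbert_Choice.inv v) ` Gk = Gk"
proof
  show "(\<lambda>g. v \<circ> g \<circ> Hilbert_Choice.inv v) ` Gk \<subseteq> Gk" using Gk_conj_closed[OF v] by blast
  show "Gk \<subseteq> (\<lambda>g. v \<circ> g \<circ> Hilbert_Choice.inv v) ` Gk"
  proof
    fix g assume "g \<in> Gk"
    then have "Hilbert_Choice.inv v \<circ> g \<circ> v \<in> Gk"
      using Gk_conj_closed[OF permutes_inv[OF v]] inv_inv_eq[OF permutes_bij[OF v]] by metis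
    moreover have "g = v \<circ> (Hilbert_Choice.inv v \<circ> g \<circ> v) \<circ> Hilbert_Choice.inv v"
      by (simp add: fun_eq_iff permutes_inverses[OF v])
    ultimately show "g \<in> (\<lambda>g. v \<circ> g \<circ> Hilbert_Choice.inv v) ` Gk" by blast
  qed
qed

lemma Gk_moves_to_4: "a \<in> {1..4} \<Longrightarrow> \<exists>g\<in>Gk. g a = 4"
  unfolding atLeastAtMost_1_4 by (elim insertE emptyE; simp add: Gk_def transpose_def)

lemma double_transposition_in_Gk:
  assumes "distinct [a, b, c, d]" "{a, b, c, d} = {1..4}"
  shows "transpose a b \<circ> transpose c d \<in> Gk"
  unfolding Gk_iff_fixpoint_free_involution
proof (intro conjI disjI2 ballI)
  show "transpose a b \<circ> transpose c d permutes {1..4}"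
    using assms(2) by (intro permutes_compose permutes_swap_id) auto
  fix x :: nat
  assume "x \<in> {1..4}"
  then have "x \<in> {a, b, c, d}" using assms(2) by simp
  then show "(transpose a b \<circ> transpose c d) x \<noteq> x"
    "(transpose a b \<circ> transpose c d) ((transpose a b \<circ> transpose c d) x) = x"
    using assms(1) by (auto simp: transpose_def)
qed

lemma act_comp: "act (f \<circ> g) A = act f (act g A)"
  by (simp add: act_def image_comp)

lemma act_id: "act id A = A"
  by (simp add: act_def)

lemma act_tabloids:
  assumes v: "v permutes {1..4}" and A: "A \<in> tabloids lam"
  shows "act v A \<in> tabloids lam"
proof -
  have "inj v" using permutes_inj[OF v] .
  then have "card (v ` S) = card S" "v ` S \<inter> v ` T = v ` (S \<inter> T)" for S T
    by (simp_all add: card_image inj_on_subset image_Int)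
  moreover have "v ` S \<subseteq> {1..4}" if "S \<subseteq> {1..4}" for S
    using that permutes_in_image[OF v] by blast
  ultimately show ?thesis using A unfolding tabloids_def act_def by auto
qed

lemma orb_self: "A \<in> orb A"
  unfolding orb_def using id_in_Gk act_id by (metis image_eqI)

lemma orb_act_Gk:
  assumes g: "g \<in> Gk"
  shows "orb (act g A) = orb A"
proof -
  have sub: "orb (act h B) \<subseteq> orb B" if "h \<in> Gk" for h B
    unfolding orb_def using that by (auto simp: act_comp[symmetric] intro!: imageI Gk_comp_closed)
  have "orb A = orb (act g (act g A))"
    by (simp add: act_comp[symmetric] Gk_comp_self[OF g] act_id)
  then show ?thesis using sub[OF g, of A] sub[OF g, of "act g A"] by blast
qed

lemma orb_act_eq:
  assumes v: "v permutes {1..4}" and B: "B \<in> orb A"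
  shows "orb (act v B) = orb (act v A)"
proof -
  obtain g where g: "g \<in> Gk" and "B = act g A" using B unfolding orb_def by blast
  then have "act v B = act (v \<circ> g \<circ> Hilbert_Choice.inv v) (act v A)"
    by (simp add: act_comp[symmetric] comp_assoc permutes_inv_o(2)[OF v])
  then show ?thesis using orb_act_Gk Gk_conj_closed[OF v g] by simp
qed

lemma orb_mem_T4G: "lam \<in> partitions4 \<Longrightarrow> A \<in> tabloids lam \<Longrightarrow> orb A \<in> T4G"
  unfolding T4G_def TG_def by blast

lemma T4G_E:
  assumes "a \<in> T4G"
  obtains lam A where "lam \<in> partitions4" "A \<in> tabloids lam" "a = orb A"
  using assms unfolding T4G_def TG_def by blast

lemma hat_orb:
  assumes v: "v permutes {1..4}" and "lam \<in> partitions4" "A \<in> tabloids lam"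
  shows "hat v (orb A) = orb (act v A)"
proof -
  have "(SOME B. B \<in> orb A) \<in> orb A" using orb_self by (rule someI)
  then show ?thesis
    using orb_mem_T4G[OF assms(2,3)] orb_act_eq[OF v] by (simp add: hat_def)
qed

lemma hat_outside_T4G: "a \<notin> T4G \<Longrightarrow> hat v a = a"
  by (simp add: hat_def)

lemma hat_comp:
  assumes v: "v permutes {1..4}" and u: "u permutes {1..4}"
  shows "hat (v \<circ> u) = hat v \<circ> hat u"
proof
  fix a
  show "hat (v \<circ> u) a = (hat v \<circ> hat u) a"
  proof (cases "a \<in> T4G")
    case True
    then obtain lam A where "lam \<in> partitions4" "A \<in> tabloids lam" "a = orb A"
      by (rule T4G_E)
    then show ?thesis
      using hat_orb[OF v] hat_orb[OF u] hat_orb[OF permutes_compose[OF u v]] act_tabloids[OF u]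
      by (simp add: act_comp)
  qed (simp add: hat_outside_T4G)
qed

lemma hat_Gk: 
  assumes g: "g \<in> Gk"
  shows "hat g = id"
proof
  fix a
  show "hat g a = id a"
  proof (cases "a \<in> T4G")
    case True
    then obtain lam A where "lam \<in> partitions4" "A \<in> tabloids lam" "a = orb A"
      by (rule T4G_E)
    then show ?thesis using hat_orb[OF Gk_permutes[OF g]] orb_act_Gk[OF g] by simp
  qed (simp add: hat_outside_T4G)
qed

lemma hat_inv_cancel:
  assumes v: "v permutes {1..4}"
  shows "hat (Hilbert_Choice.inv v) \<circ> hat v = id" "hat v \<circ> hat (Hilbert_Choice.inv v) = id"
  using hat_comp[OF permutes_inv[OF v] v] hat_comp[OF v permutes_inv[OF v]]
    permutes_inv_o[OF v] hat_Gk[OF id_in_Gk] by simp_all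

lemma hat_image_TG:
  assumes v: "v permutes {1..4}" and mu: "mu \<in> partitions4"
  shows "hat v ` TG mu = TG mu"
proof -
  have sub: "hat w ` TG mu \<subseteq> TG mu" if w: "w permutes {1..4}" for w
  proof
    fix x assume "x \<in> hat w ` TG mu"
    then obtain A where A: "A \<in> tabloids mu" and "x = hat w (orb A)"
      unfolding TG_def by blast
    then show "x \<in> TG mu"
      using hat_orb[OF w mu A] act_tabloids[OF w A] unfolding TG_def by simp
  qed
  have "TG mu = hat v ` hat (Hilbert_Choice.inv v) ` TG mu"
    using hat_inv_cancel(2)[OF v] by (simp add: image_comp)
  also have "\<dots> \<subseteq> hat v ` TG mu"
    using sub[OF permutes_inv[OF v]] by (rule image_mono)
  finally show ?thesis using sub[OF v] by (rule antisym[rotated])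
qed

lemma hat_maps_T4G:
  assumes "v permutes {1..4}" "a \<in> T4G"
  shows "hat v a \<in> T4G"
proof -
  obtain mu where "mu \<in> partitions4" "a \<in> TG mu" using assms(2) unfolding T4G_def by blast
  then show ?thesis using hat_image_TG[OF assms(1)] unfolding T4G_def by blast
qed

lemma tab_le_act: "tab_le A B \<Longrightarrow> tab_le (act v A) (act v B)"
proof -
  have "\<Union>(set (take i (act v X))) = v ` \<Union>(set (take i X))" for i X
    by (simp add: act_def take_map image_Union)
  then show "tab_le A B \<Longrightarrow> tab_le (act v A) (act v B)"
    unfolding tab_le_def by (metis image_mono)
qed

lemma orb_le_hat:
  assumes v: "v permutes {1..4}" and "a \<in> T4G" "b \<in> T4G" "orb_le a b"
  shows "orb_le (hat v a) (hat v b)"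
proof -
  obtain A B where "A \<in> a" "B \<in> b" and AB: "tab_le A B"
    using assms(4) orb_le_def by blast
  moreover obtain lam A0 mu B0 where "lam \<in> partitions4" "A0 \<in> tabloids lam" "a = orb A0"
    and "mu \<in> partitions4" "B0 \<in> tabloids mu" "b = orb B0"
    using assms(2,3) by (metis T4G_E)
  ultimately have "hat v a = orb (act v A)" "hat v b = orb (act v B)"
    using hat_orb[OF v] orb_act_eq[OF v] by simp_all
  then show ?thesis
    unfolding orb_le_def using orb_self tab_le_act[OF AB] by blast
qed

lemma hat_in_Aut0:
  assumes v: "v permutes {1..4}"
  shows "hat v \<in> Aut0"
proof -
  have v': "Hilbert_Choice.inv v permutes {1..4}" using permutes_inv[OF v] .
  have "bij_betw (hat v) T4G T4G"
    by (rule bij_betw_byWitness[where f'="hat (Hilbert_Choice.inv v)"])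
      (use hat_inv_cancel[OF v] hat_maps_T4G[OF v] hat_maps_T4G[OF v'] in
        \<open>auto simp: fun_eq_iff\<close>)
  moreover have "orb_le (hat v a) (hat v b) \<longleftrightarrow> orb_le a b" if "a \<in> T4G" "b \<in> T4G" for a b
    using orb_le_hat[OF v that] orb_le_hat[OF v' hat_maps_T4G[OF v that(1)] hat_maps_T4G[OF v that(2)]]
      hat_inv_cancel(1)[OF v] by (auto simp: fun_eq_iff)
  ultimately show ?thesis
    unfolding Aut0_def using hat_image_TG[OF v] hat_outside_T4G by blast
qed

lemma hat_hom: "hat \<in> hom (sym_group 4) aut0_group"
  by (rule homI) (simp_all add: sym_group_def aut0_group_def hat_in_Aut0 hat_comp)

lemma singletons_in_tabloids:
  assumes "distinct [a, b, c, d]" "{a, b, c, d} = {1..4}"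
  shows "[{a}, {b}, {c}, {d}] \<in> tabloids [1, 1, 1, 1]"
  using assms unfolding tabloids_def by (auto simp: numeral_eq_Suc All_less_Suc2)

lemma tabloids_1111_E:
  assumes "A \<in> tabloids [1, 1, 1, 1]"
  obtains a b c d where "A = [{a}, {b}, {c}, {d}]" "distinct [a, b, c, d]" "{a, b, c, d} = {1..4}"
proof -
  from assms have "length A = 4" by (simp add: tabloids_def)
  then obtain X0 X1 X2 X3 where A: "A = [X0, X1, X2, X3]"
    by (auto simp: numeral_eq_Suc length_Suc_conv)
  with assms have sub: "X0 \<union> X1 \<union> X2 \<union> X3 \<subseteq> {1..4}"
    and "card X0 = 1" "card X1 = 1" "card X2 = 1" "card X3 = 1"
    and disj: "X0 \<inter> X1 = {}" "X0 \<inter> X2 = {}" "X0 \<inter> X3 = {}"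
      "X1 \<inter> X2 = {}" "X1 \<inter> X3 = {}" "X2 \<inter> X3 = {}"
    unfolding tabloids_def by (simp_all add: numeral_eq_Suc All_less_Suc2)
  then obtain a b c d where X: "X0 = {a}" "X1 = {b}" "X2 = {c}" "X3 = {d}"
    by (metis card_1_singletonE)
  with disj have dist: "distinct [a, b, c, d]" by auto
  moreover have "{a, b, c, d} = {1..4}"
  proof (rule card_subset_eq)
    show "{a, b, c, d} \<subseteq> {1..4}" using sub X by auto
    show "card {a, b, c, d} = card {1..4::nat}" using dist by simp
  qed simp
  ultimately show ?thesis using that A X by blast
qed

lemma tabloids_1111_eq:
  "tabloids [1, 1, 1, 1] = (\<lambda>v. [{v 1}, {v 2}, {v 3}, {v 4}]) ` {v :: nat \<Rightarrow> nat. v permutes {1..4}}"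
proof (intro equalityI subsetI)
  fix A assume "A \<in> tabloids [1, 1, 1, 1]"
  then obtain a b c d where A: "A = [{a}, {b}, {c}, {d}]"
    and quad: "distinct [a, b, c, d]" "{a, b, c, d} = {1..4}"
    by (rule tabloids_1111_E)
  let ?v = "id(1 := a, 2 := b, 3 := c, 4 := d)"
  have "?v permutes {1..4}" using quad by (rule permutes_of_values)
  moreover have "A = [{?v 1}, {?v 2}, {?v 3}, {?v 4}]" by (simp add: A)
  ultimately show "A \<in> (\<lambda>v. [{v 1}, {v 2}, {v 3}, {v 4}]) ` {v. v permutes {1..4}}"
    by blast
next
  fix A assume "A \<in> (\<lambda>v. [{v 1}, {v 2}, {v 3}, {v 4}]) ` {v :: nat \<Rightarrow> nat. v permutes {1..4}}"
  then obtain v :: "nat \<Rightarrow> nat"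
    where v: "v permutes {1..4}" and A: "A = [{v 1}, {v 2}, {v 3}, {v 4}]"
    by blast
  have "distinct [1, 2, 3, 4::nat]" "{1, 2, 3, 4} = {1..4::nat}" by auto
  from permutes_distinct_cover[OF v this] show "A \<in> tabloids [1, 1, 1, 1]"
    unfolding A by (rule singletons_in_tabloids)
qed

lemma singletons_1_4_in_tabloids: "[{1}, {2}, {3}, {4}] \<in> tabloids [1, 1, 1, 1]"
  by (rule singletons_in_tabloids) auto

lemma hat_fixpoint_TG_1111_imp_Gk:
  assumes v: "v permutes {1..4}" and x: "x \<in> TG [1, 1, 1, 1]" and fixed: "hat v x = x"
  shows "v \<in> Gk"
proof -
  obtain w where w: "w permutes {1..4}" and x_eq: "x = orb [{w 1}, {w 2}, {w 3}, {w 4}]"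
    using x unfolding TG_def tabloids_1111_eq by blast
  have tab: "[{w 1}, {w 2}, {w 3}, {w 4}] \<in> tabloids [1, 1, 1, 1]"
    using w unfolding tabloids_1111_eq by blast
  have "orb [{v (w 1)}, {v (w 2)}, {v (w 3)}, {v (w 4)}] = x"
    using fixed hat_orb[OF v _ tab] x_eq by (simp add: partitions4_def act_def)
  then have "[{v (w 1)}, {v (w 2)}, {v (w 3)}, {v (w 4)}] \<in> orb [{w 1}, {w 2}, {w 3}, {w 4}]"
    using orb_self x_eq by metis
  then obtain g where g: "g \<in> Gk"
    and "v (w 1) = g (w 1)" "v (w 2) = g (w 2)" "v (w 3) = g (w 3)" "v (w 4) = g (w 4)"
    unfolding orb_def act_def by auto
  then have "v \<circ> w = g \<circ> w"
    by (intro permutes_1_4_eqI permutes_compose w v Gk_permutes) simp_all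
  then have "v = g"
    using permutes_inv_o(1)[OF w] by (metis comp_assoc comp_id)
  with g show ?thesis by simp
qed

lemma hat_orb_singletons:
  assumes "v permutes {1..4}"
  shows "hat v (orb [{1}, {2}, {3}, {4}]) = orb [{v 1}, {v 2}, {v 3}, {v 4}]"
  using hat_orb[OF assms _ singletons_1_4_in_tabloids] by (simp add: partitions4_def act_def)

lemma orb_singletons_in_TG: "orb [{1}, {2}, {3}, {4}] \<in> TG [1, 1, 1, 1]"
  unfolding TG_def using singletons_1_4_in_tabloids by (rule imageI)

lemma kernel_hat: "kernel (sym_group 4) aut0_group hat = Gk"
proof
  show "kernel (sym_group 4) aut0_group hat \<subseteq> Gk"
  proof
    fix v assume "v \<in> kernel (sym_group 4) aut0_group hat"
    then have "v permutes {1..4}" "hat v = id"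
      unfolding kernel_def sym_group_def aut0_group_def by auto
    then show "v \<in> Gk" using hat_fixpoint_TG_1111_imp_Gk orb_singletons_in_TG by simp
  qed
  show "Gk \<subseteq> kernel (sym_group 4) aut0_group hat"
    unfolding kernel_def sym_group_def aut0_group_def using Gk_permutes hat_Gk by auto
qed

lemma permutes_1_3_imp_1_4: "p permutes {1..3} \<Longrightarrow> p permutes {1..4::nat}"
  by (rule permutes_subset) auto

lemma hat_eq_hat_of_permutes_1_3:
  assumes v: "v permutes {1..4}"
  obtains p where "p permutes {1..3}" "hat v = hat p"
proof -
  obtain g where g: "g \<in> Gk" "g (v 4) = 4"
    using Gk_moves_to_4[of "v 4"] permutes_in_image[OF v, of 4] by auto
  have "g \<circ> v permutes {1..3}"
  proof (rule permutes_superset[OF permutes_compose[OF v Gk_permutes[OF g(1)]]])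
    fix x :: nat
    assume "x \<in> {1..4} - {1..3}"
    then have "x = 4" by auto
    then show "(g \<circ> v) x = x" using g(2) by simp
  qed
  moreover have "hat v = hat (g \<circ> v)"
    by (simp add: hat_comp[OF Gk_permutes[OF g(1)] v] hat_Gk[OF g(1)])
  ultimately show ?thesis using that by blast
qed

lemma hat_image_sym_group_3: "hat ` carrier (sym_group 3) = hat ` carrier (sym_group 4)"
proof
  show "hat ` carrier (sym_group 3) \<subseteq> hat ` carrier (sym_group 4)"
    by (rule image_mono) (use permutes_1_3_imp_1_4 in \<open>auto simp: sym_group_carrier\<close>)
  show "hat ` carrier (sym_group 4) \<subseteq> hat ` carrier (sym_group 3)"
  proof
    fix f assume "f \<in> hat ` carrier (sym_group 4)"
    then obtain v where v: "v permutes {1..4}" and f: "f = hat v" by (auto simp: sym_group_carrier)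
    obtain p where "p permutes {1..3}" "hat v = hat p" using v by (rule hat_eq_hat_of_permutes_1_3)
    then show "f \<in> hat ` carrier (sym_group 3)" using f sym_group_carrier by blast
  qed
qed

lemma permutes_1_3_eq_of_hat_agree:
  assumes p: "p permutes {1..3}" and q: "q permutes {1..3}"
    and x: "x \<in> TG [1, 1, 1, 1]" and agree: "hat p x = hat q x"
  shows "p = q"
proof -
  note p4 = permutes_1_3_imp_1_4[OF p] and q4 = permutes_1_3_imp_1_4[OF q]
  let ?r = "Hilbert_Choice.inv q \<circ> p"
  have r: "?r permutes {1..4}" by (intro permutes_compose permutes_inv p4 q4)
  have "hat ?r x = x"
    using agree hat_inv_cancel(1)[OF q4]
    by (simp add: hat_comp[OF permutes_inv[OF q4] p4] fun_eq_iff)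
  then have "?r \<in> Gk" by (rule hat_fixpoint_TG_1111_imp_Gk[OF r x])
  moreover have "?r 4 = 4"
    using permutes_not_in[OF p] permutes_not_in[OF permutes_inv[OF q]] by simp
  ultimately have "?r = id" by (rule Gk_fixpoint_imp_id) simp
  moreover have "p = q \<circ> ?r"
    by (simp add: comp_assoc[symmetric] permutes_inv_o(1)[OF q4])
  ultimately show ?thesis by simp
qed

lemma hat_iso_hidden_sym_group: "hat \<in> iso (sym_group 3) hidden_sym_group"
proof -
  have "hat \<in> hom (sym_group 3) hidden_sym_group"
  proof (rule homI)
    fix p q assume "p \<in> carrier (sym_group 3)" "q \<in> carrier (sym_group 3)"
    then have "hat (p \<circ> q) = hat p \<circ> hat q"
      unfolding sym_group_carrier by (intro hat_comp permutes_1_3_imp_1_4)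
    then show "hat (p \<otimes>\<^bsub>sym_group 3\<^esub> q) = hat p \<otimes>\<^bsub>hidden_sym_group\<^esub> hat q"
      by (simp add: sym_group_mult hidden_sym_group_def)
  qed (use hat_image_sym_group_3 in \<open>auto simp: hidden_sym_group_def\<close>)
  moreover have "inj_on hat (carrier (sym_group 3))"
    using permutes_1_3_eq_of_hat_agree[OF _ _ orb_singletons_in_TG]
    by (auto simp: inj_on_def sym_group_carrier)
  ultimately show ?thesis
    by (simp add: iso_def bij_betw_def hidden_sym_group_def hat_image_sym_group_3)
qed

lemma card_TG_1111: "card (TG [1, 1, 1, 1]) = 6"
proof -
  let ?x = "orb [{1}, {2}, {3}, {4}]"
  have "TG [1, 1, 1, 1] = (\<lambda>v. hat v ?x) ` carrier (sym_group 4)"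
    unfolding TG_def tabloids_1111_eq image_image sym_group_def
    by (rule image_cong) (simp_all add: hat_orb_singletons del: One_nat_def)
  also have "\<dots> = (\<lambda>f. f ?x) ` hat ` carrier (sym_group 4)"
    by (simp add: image_image)
  also have "\<dots> = (\<lambda>p. hat p ?x) ` carrier (sym_group 3)"
    by (simp add: image_image flip: hat_image_sym_group_3)
  finally have TG: "TG [1, 1, 1, 1] = (\<lambda>p. hat p ?x) ` carrier (sym_group 3)" .
  have "inj_on (\<lambda>p. hat p ?x) (carrier (sym_group 3))"
    by (intro inj_onI permutes_1_3_eq_of_hat_agree[OF _ _ orb_singletons_in_TG])
      (simp_all add: sym_group_carrier del: One_nat_def)
  then show ?thesis
    unfolding TG by (simp add: card_image sym_group_card_carrier fact_numeral)
qed

lemma P_eq_orb: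
  assumes "distinct [i, j, k, l]" "{i, j, k, l} = {1..4}"
  shows "P i j = orb [{i, j}, {k, l}]"
proof -
  have "{1..4} - {i, j} = {k, l}"
    unfolding assms(2)[symmetric] using assms(1) by auto
  then show ?thesis by (simp add: P_def)
qed

lemma orb_swap_last_rows:
  assumes "distinct [i, j, k, l]" "{i, j, k, l} = {1..4}"
  shows "orb [{i, j}, {l}, {k}] = orb [{i, j}, {k}, {l}]"
proof -
  have "act (transpose i j \<circ> transpose k l) [{i, j}, {k}, {l}] = [{i, j}, {l}, {k}]"
    using assms(1) by (simp add: act_def transpose_def insert_commute)
  then show ?thesis
    using orb_act_Gk[OF double_transposition_in_Gk[OF assms]] by metis
qed

lemma Q_eq_orb:
  assumes "distinct [i, j, k, l]" "{i, j, k, l} = {1..4}"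
  shows "Q i j = orb [{i, j}, {k}, {l}]"
proof -
  have kl: "{1..4} - {i, j} = {k, l}"
    unfolding assms(2)[symmetric] using assms(1) by auto
  show ?thesis
  proof (cases "k < l")
    case True
    then show ?thesis unfolding Q_def kl by simp
  next
    case False
    then have "Q i j = orb [{i, j}, {l}, {k}]"
      using assms(1) unfolding Q_def kl by (simp add: insert_commute)
    then show ?thesis using orb_swap_last_rows[OF assms] by simp
  qed
qed

lemma pair_tabloids:
  assumes "distinct [i, j, k, l]" "{i, j, k, l} = {1..4}"
  shows "[{i, j}, {k, l}] \<in> tabloids [2, 2]" "[{i, j}, {k}, {l}] \<in> tabloids [2, 1, 1]"
proof -
  have "{i, j} \<subseteq> {1..4}" "{k, l} \<subseteq> {1..4}" "{k} \<subseteq> {1..4}" "{l} \<subseteq> {1..4}"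
    using assms(2) by blast+
  then show "[{i, j}, {k, l}] \<in> tabloids [2, 2]" "[{i, j}, {k}, {l}] \<in> tabloids [2, 1, 1]"
    using assms(1) unfolding tabloids_def by (auto simp: numeral_eq_Suc All_less_Suc2)
qed

lemma hat_P_Q:
  assumes v: "v permutes {1..4}" and "i \<in> {1..4}" "j \<in> {1..4}" "i \<noteq> j"
  shows "hat v (P i j) = P (v i) (v j)" "hat v (Q i j) = Q (v i) (v j)"
proof -
  obtain k l where quad: "distinct [i, j, k, l]" "{i, j, k, l} = {1..4}"
    using assms(2-4) by (rule complement_pair_exists)
  note vquad = permutes_distinct_cover[OF v quad]
  have parts: "[2, 2] \<in> partitions4" "[2, 1, 1] \<in> partitions4"
    by (simp_all add: partitions4_def)
  show "hat v (P i j) = P (v i) (v j)"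
    using hat_orb[OF v parts(1) pair_tabloids(1)[OF quad]]
    by (simp add: P_eq_orb[OF quad] P_eq_orb[OF vquad] act_def)
  show "hat v (Q i j) = Q (v i) (v j)"
    using hat_orb[OF v parts(2) pair_tabloids(2)[OF quad]]
    by (simp add: Q_eq_orb[OF quad] Q_eq_orb[OF vquad] act_def)
qed

lemma P_Q_complement:
  assumes quad: "distinct [i, j, k, l]" "{i, j, k, l} = {1..4}"
  shows "P i j = P k l" "Q i j = Q k l"
proof -
  have "distinct [i, k, j, l]" "{i, k, j, l} = {1..4}"
    using quad by (auto simp: insert_commute)
  note g = double_transposition_in_Gk[OF this]
  have quad': "distinct [k, l, i, j]" "{k, l, i, j} = {1..4}"
    using quad by (auto simp: insert_commute)
  have "act (transpose i k \<circ> transpose j l) [{i, j}, {k, l}] = [{k, l}, {i, j}]"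
    "act (transpose i k \<circ> transpose j l) [{i, j}, {k}, {l}] = [{k, l}, {i}, {j}]"
    using quad(1) by (simp_all add: act_def transpose_def insert_commute)
  then have "orb [{i, j}, {k, l}] = orb [{k, l}, {i, j}]"
    "orb [{i, j}, {k}, {l}] = orb [{k, l}, {i}, {j}]"
    using orb_act_Gk[OF g] by metis+
  then show "P i j = P k l" "Q i j = Q k l"
    by (simp_all add: P_eq_orb[OF quad] P_eq_orb[OF quad'] Q_eq_orb[OF quad] Q_eq_orb[OF quad'])
qed

lemma P_Q_commute: "P i j = P j i" "Q i j = Q j i"
  by (simp_all add: P_def Q_def insert_commute)

lemma ex_not_mem_of_card_less:
  assumes "finite A" "card A < card B"
  shows "\<exists>x\<in>B. x \<notin> A"
proof (rule ccontr)
  assume "\<not> ?thesis"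
  then have "B \<subseteq> A" by blast
  then have "card B \<le> card A" by (rule card_mono[OF assms(1)])
  with assms(2) show False by simp
qed

lemma set_eq_of_distinct_card:
  assumes "finite S" "distinct xs" "set xs \<subseteq> S" "length xs = card S"
  shows "S = set xs"
  using assms by (metis card_subset_eq distinct_card)

lemma three_disjoint_transpositionsI:
  assumes S: "finite S" "card S = 6" and maps: "\<And>x. x \<in> S \<Longrightarrow> f x \<in> S"
    and fpf: "\<And>x. x \<in> S \<Longrightarrow> f x \<noteq> x" and invol: "\<And>x. x \<in> S \<Longrightarrow> f (f x) = x"
  shows "three_disjoint_transpositions f S"
proof -
  obtain x1 where x1: "x1 \<in> S" using S by fastforce
  obtain x3 where x3: "x3 \<in> S" "x3 \<notin> {x1, f x1}"
    using ex_not_mem_of_card_less[of "{x1, f x1}" S] S card_length[of "[x1, f x1]"] by auto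
  obtain x5 where x5: "x5 \<in> S" "x5 \<notin> {x1, f x1, x3, f x3}"
    using ex_not_mem_of_card_less[of "{x1, f x1, x3, f x3}" S] S
      card_length[of "[x1, f x1, x3, f x3]"]
    by auto
  have off_pair: "f y \<notin> {x, f x}" if x: "x \<in> S" and y: "y \<in> S" "y \<notin> {x, f x}" for x y
  proof
    assume "f y \<in> {x, f x}"
    then have "f (f y) \<in> {f x, f (f x)}" by auto
    then show False using invol[OF x] invol[OF y(1)] y(2) by auto
  qed
  let ?xs = "[x1, f x1, x3, f x3, x5, f x5]"
  have dist: "distinct ?xs"
    using x3 x5 off_pair[OF x1 x3] off_pair[OF x1 x5(1)] off_pair[OF x3(1) x5(1)]
      fpf[OF x1] fpf[OF x3(1)] fpf[OF x5(1)]
    by auto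
  have "set ?xs \<subseteq> S" using x1 x3 x5 maps by simp
  with dist have "S = set ?xs" by (rule set_eq_of_distinct_card[OF S(1)]) (simp add: S(2))
  then have "S = {x1, f x1, x3, f x3, x5, f x5}" by simp
  moreover have "f (f x1) = x1" "f (f x3) = x3" "f (f x5) = x5"
    using invol x1 x3(1) x5(1) by simp_all
  ultimately show ?thesis
    unfolding three_disjoint_transpositions_def using dist by blast
qed

lemma two_disjoint_3cyclesI:
  assumes S: "finite S" "card S = 6" and maps: "\<And>x. x \<in> S \<Longrightarrow> f x \<in> S"
    and fpf: "\<And>x. x \<in> S \<Longrightarrow> f x \<noteq> x" and order3: "\<And>x. x \<in> S \<Longrightarrow> f (f (f x)) = x"
  shows "two_disjoint_3cycles f S"
proof -
  obtain x1 where x1: "x1 \<in> S" using S by fastforce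
  obtain x4 where x4: "x4 \<in> S" "x4 \<notin> {x1, f x1, f (f x1)}"
    using ex_not_mem_of_card_less[of "{x1, f x1, f (f x1)}" S] S
      card_length[of "[x1, f x1, f (f x1)]"]
    by auto
  let ?xs = "[x1, f x1, f (f x1), x4, f x4, f (f x4)]"
  have off_orbit: "f y \<notin> {x, f x, f (f x)}"
    if x: "x \<in> S" and y: "y \<in> S" "y \<notin> {x, f x, f (f x)}" for x y
  proof
    assume "f y \<in> {x, f x, f (f x)}"
    then have "f (f (f y)) \<in> {f (f x), f (f (f x)), f (f (f (f x)))}" by auto
    then show False using order3[OF x] order3[OF maps[OF x]] order3[OF y(1)] y(2) by auto
  qed
  have orbit: "distinct [x, f x, f (f x)]" if x: "x \<in> S" for x
  proof -
    have "f (f x) \<noteq> x"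
    proof
      assume "f (f x) = x"
      then have "f x = x" using order3[OF x] by simp
      with fpf[OF x] show False ..
    qed
    then show ?thesis using fpf[OF x] fpf[OF maps[OF x]] by auto
  qed
  have sub: "set ?xs \<subseteq> S" using x1 x4 maps by simp
  have dist: "distinct ?xs"
    using x4 orbit[OF x1] orbit[OF x4(1)] off_orbit[OF x1 x4] off_orbit[OF x1 maps[OF x4(1)]]
    by auto
  from dist sub have "S = set ?xs" by (rule set_eq_of_distinct_card[OF S(1)]) (simp add: S(2))
  then have "S = {x1, f x1, f (f x1), x4, f x4, f (f x4)}" by simp
  moreover have "f (f (f x1)) = x1" "f (f (f x4)) = x4"
    using order3 x1 x4(1) by simp_all
  ultimately show ?thesis
    unfolding two_disjoint_3cycles_def using dist by blast
qed

lemma hat_TG_1111_fixpoint_free: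
  assumes v: "v permutes {1..4}" and "v \<notin> Gk" and x: "x \<in> TG [1, 1, 1, 1]"
  shows "hat v x \<in> TG [1, 1, 1, 1]" "hat v x \<noteq> x"
proof -
  have "[1, 1, 1, 1] \<in> partitions4" by (simp add: partitions4_def)
  then show "hat v x \<in> TG [1, 1, 1, 1]" using hat_image_TG[OF v] x by blast
  show "hat v x \<noteq> x" using hat_fixpoint_TG_1111_imp_Gk[OF v x] assms(2) by blast
qed

lemma finite_TG_1111: "finite (TG [1, 1, 1, 1])"
  using card_TG_1111 by (metis card.infinite zero_neq_numeral)

lemma hat_transposition_three_disjoint_transpositions:
  assumes "is_transposition4 v"
  shows "three_disjoint_transpositions (hat v) (TG [1, 1, 1, 1])"
proof -
  obtain a b where ab: "a \<in> {1..4}" "b \<in> {1..4}" "a \<noteq> b" and v: "v = transpose a b"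
    using assms unfolding is_transposition4_def by blast
  have perm: "v permutes {1..4}" using ab by (simp add: v permutes_swap_id)
  obtain k where k: "k \<in> {1..4}" "k \<notin> {a, b}"
    using ex_not_mem_of_card_less[of "{a, b}" "{1..4::nat}"] card_length[of "[a, b]"] by auto
  have "v \<notin> Gk"
  proof
    assume "v \<in> Gk"
    moreover have "v k = k" using k by (simp add: v)
    ultimately have "v = id" using k(1) by (rule Gk_fixpoint_imp_id)
    then show False using ab(3) by (metis v id_apply transpose_apply_first)
  qed
  show ?thesis
  proof (rule three_disjoint_transpositionsI[OF finite_TG_1111 card_TG_1111])
    fix x assume "x \<in> TG [1, 1, 1, 1]"
    then show "hat v x \<in> TG [1, 1, 1, 1]" "hat v x \<noteq> x"
      using hat_TG_1111_fixpoint_free[OF perm \<open>v \<notin> Gk\<close>] by blast+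
    show "hat v (hat v x) = x"
      using hat_comp[OF perm perm] hat_Gk[OF id_in_Gk] by (simp add: v fun_eq_iff)
  qed
qed

lemma hat_3cycle_two_disjoint_3cycles:
  assumes "is_3cycle4 v"
  shows "two_disjoint_3cycles (hat v) (TG [1, 1, 1, 1])"
proof -
  obtain a b c where abc: "a \<in> {1..4}" "b \<in> {1..4}" "c \<in> {1..4}" "distinct [a, b, c]"
    and v: "v = (\<lambda>x. if x = a then b else if x = b then c else if x = c then a else x)"
    using assms unfolding is_3cycle4_def by blast
  have "v = transpose a b \<circ> transpose b c"
    using abc(4) by (auto simp: v fun_eq_iff transpose_def)
  then have perm: "v permutes {1..4}"
    using abc by (simp add: permutes_compose permutes_swap_id)
  have order3: "v \<circ> v \<circ> v = id"
    using abc(4) by (auto simp: v fun_eq_iff)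
  obtain d where d: "d \<in> {1..4}" "d \<notin> {a, b, c}"
    using ex_not_mem_of_card_less[of "{a, b, c}" "{1..4::nat}"] card_length[of "[a, b, c]"] by auto
  have "v \<notin> Gk"
  proof
    assume "v \<in> Gk"
    moreover have "v d = d" using d by (simp add: v)
    ultimately have "v = id" using d(1) by (rule Gk_fixpoint_imp_id)
    then show False using abc(4) by (metis v id_apply distinct_length_2_or_more)
  qed
  show ?thesis
  proof (rule two_disjoint_3cyclesI[OF finite_TG_1111 card_TG_1111])
    fix x assume "x \<in> TG [1, 1, 1, 1]"
    then show "hat v x \<in> TG [1, 1, 1, 1]" "hat v x \<noteq> x"
      using hat_TG_1111_fixpoint_free[OF perm \<open>v \<notin> Gk\<close>] by blast+
    have "hat v (hat v (hat v x)) = hat (v \<circ> v \<circ> v) x"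
      by (simp add: hat_comp[OF permutes_compose[OF perm perm] perm] hat_comp[OF perm perm])
    also have "\<dots> = x"
      by (simp add: order3 hat_Gk[OF id_in_Gk])
    finally show "hat v (hat v (hat v x)) = x" .
  qed
qed

lemma hat_transpose_1_3:
  "hat (transpose 1 3) (P 1 2) = P 1 4 \<and> hat (transpose 1 3) (P 1 4) = P 1 2
    \<and> hat (transpose 1 3) (P 1 3) = P 1 3
    \<and> hat (transpose 1 3) (Q 1 2) = Q 1 4 \<and> hat (transpose 1 3) (Q 1 4) = Q 1 2
    \<and> hat (transpose 1 3) (Q 1 3) = Q 1 3"
proof -
  have perm: "transpose 1 3 permutes {1..4::nat}" by (rule permutes_swap_id) auto
  have "P 3 2 = P 1 4" "Q 3 2 = Q 1 4" "P 3 4 = P 1 2" "Q 3 4 = Q 1 2"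
    using P_Q_complement[of 3 2 1 4] P_Q_complement[of 3 4 1 2]
    unfolding atLeastAtMost_1_4 by (auto simp: insert_commute)
  then show ?thesis
    using hat_P_Q[OF perm, of 1 2] hat_P_Q[OF perm, of 1 4] hat_P_Q[OF perm, of 1 3] P_Q_commute[of 3 1]
    by (simp add: transpose_def)
qed

theorem proposition10p1p2:
  shows "(\<forall>\<nu>\<in>carrier (sym_group 4). (\<lambda>g. \<nu> \<circ> g \<circ> Hilbert_Choice.inv \<nu>) ` Gk = Gk)
    \<and> hat \<in> hom (sym_group 4) aut0_group
    \<and> kernel (sym_group 4) aut0_group hat = Gk
    \<and> card (hat ` carrier (sym_group 4)) = 6
    \<and> hidden_sym_group \<cong> sym_group 3
    \<and> (\<forall>i\<in>{1..4}. \<forall>j\<in>{1..4}. \<forall>k\<in>{1..4}. \<forall>l\<in>{1..4}. distinct [i, j, k, l] \<longrightarrow>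
          P i j = P k l \<and> Q i j = Q k l)
    \<and> (\<forall>\<nu>\<in>carrier (sym_group 4). \<forall>i\<in>{1..4}. \<forall>j\<in>{1..4}. i \<noteq> j \<longrightarrow>
          hat \<nu> (P i j) = P (\<nu> i) (\<nu> j) \<and> hat \<nu> (Q i j) = Q (\<nu> i) (\<nu> j))
    \<and> hat (transpose 1 3) (P 1 2) = P 1 4 \<and> hat (transpose 1 3) (P 1 4) = P 1 2
    \<and> hat (transpose 1 3) (P 1 3) = P 1 3
    \<and> hat (transpose 1 3) (Q 1 2) = Q 1 4 \<and> hat (transpose 1 3) (Q 1 4) = Q 1 2
    \<and> hat (transpose 1 3) (Q 1 3) = Q 1 3
    \<and> (\<forall>\<nu>. is_transposition4 \<nu> \<longrightarrow> three_disjoint_transpositions (hat \<nu>) (TG [1, 1, 1, 1]))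
    \<and> (\<forall>\<nu>. is_3cycle4 \<nu> \<longrightarrow> two_disjoint_3cycles (hat \<nu>) (TG [1, 1, 1, 1]))"
proof -
  have iso: "sym_group 3 \<cong> hidden_sym_group"
    using hat_iso_hidden_sym_group unfolding is_iso_def by blast
  then have "card (hat ` carrier (sym_group 4)) = card (carrier (sym_group 3))"
    by (simp add: iso_same_card hidden_sym_group_def)
  then have "card (hat ` carrier (sym_group 4)) = 6"
    by (simp add: sym_group_card_carrier fact_numeral)
  moreover have "\<forall>\<nu>\<in>carrier (sym_group 4). (\<lambda>g. \<nu> \<circ> g \<circ> Hilbert_Choice.inv \<nu>) ` Gk = Gk"
    using Gk_conj_image by (simp add: sym_group_carrier)
  moreover have "\<forall>\<nu>\<in>carrier (sym_group 4). \<forall>i\<in>{1..4}. \<forall>j\<in>{1..4}. i \<noteq> j \<longrightarrow>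
      hat \<nu> (P i j) = P (\<nu> i) (\<nu> j) \<and> hat \<nu> (Q i j) = Q (\<nu> i) (\<nu> j)"
    using hat_P_Q by (simp add: sym_group_carrier)
  moreover have "\<forall>i\<in>{1..4}. \<forall>j\<in>{1..4}. \<forall>k\<in>{1..4}. \<forall>l\<in>{1..4}. distinct [i, j, k, l] \<longrightarrow>
      P i j = P k l \<and> Q i j = Q k l"
  proof (intro ballI impI)
    fix i j k l :: nat
    assume "i \<in> {1..4}" "j \<in> {1..4}" "k \<in> {1..4}" "l \<in> {1..4}" and quad: "distinct [i, j, k, l]"
    then have "{i, j, k, l} = {1..4}" by (intro distinct_1_4_cover) auto
    with quad show "P i j = P k l \<and> Q i j = Q k l" by (simp add: P_Q_complement)
  qed
  ultimately show ?thesis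
    using hat_hom kernel_hat group.iso_sym[OF sym_group_is_group iso] hat_transpose_1_3
      hat_transposition_three_disjoint_transpositions
      hat_3cycle_two_disjoint_3cycles by blast
qed

end
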